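(* Let $F$ be a field of characteristic $\neq 2$ and let $O$ be a Cayley algebra over $F$ which is a division algebra (i.e. has no zero divisors). Let $V=\operatorname{im}(O)$ and let $$\mathfrak{B}=\{\operatorname{im}(H)\colon H \text{ is a 4-dimensional associative subalgebra of } O\}.$$ Then $\dim V=7$, $\dim B=3$ for every $B\in\mathfrak{B}$, and every two-dimensional subspace $U\subseteq V$ is contained in exactly one element $B\in\mathfrak{B}$. In particular $(V,\mathfrak{B})$ is a $2$-$(7,3,1)$ subspace design ($q$-Fano plane) over $F$.
   Context: All algebras are finite-dimensional $F$-vector spaces with a bilinear (not necessarily associative) multiplication and a unit $1$; subalgebras contain $1$. An involution of an algebra $A$ is a linear map $a\mapsto a^*$ with $(ab)^*=b^*a^*$ and $(a^* )^*=a$. Cayley–Dickson algebras are defined inductively: $F$ with the identity involution is one; if $A$ is a Cayley–Dickson algebra with involution $*$ and $\gamma\in F^\times$, the Dickson double $D_\gamma(A)$ is the vector space $A\oplus A$, whose elements are written $a+ib$ ($a,b\in A$), with multiplication $(a+ib)(c+id)=(ac+\gamma\, d b^* )+i(a^*d+cb)$ and involution $(a+ib)^*=a^*-ib$; it is again a Cayley–Dickson algebra. A Cayley algebra is an 8-dimensional Cayley–Dickson algebra, i.e. $D_\gamma(D_\beta(D_\alpha(F)))$ with $\alpha,\beta,\gamma\in F^\times$. For a Cayley–Dickson algebra (or a subalgebra $H$ of one), $\operatorname{im}(H)=\{a\in H: a^*=-a\}$ (the imaginary elements); one has $O=F1\oplus\operatorname{im}(O)$. A $2$-$(v,k,1)$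 subspace design on a $v$-dimensional space $V$ is a set of $k$-dimensional subspaces such that every 2-dimensional subspace of $V$ lies in exactly one of them. *)

theory Defs
  imports Main "HOL.Vector_Spaces" "HOL-Library.Function_Algebras"
begin

text \<open>Elements of a Cayley--Dickson algebra built with parameter list ps
  (outermost doubling parameter first) are functions nat => F supported on
  indices below 2^(length ps).  Index block [0,n) is the A-part a, block [n,2n)
  the i-part b of a + i b.\<close>

definition cd_scale :: "'a::field \<Rightarrow> (nat \<Rightarrow> 'a) \<Rightarrow> (nat \<Rightarrow> 'a)" where
  "cd_scale c x = (\<lambda>i. c * x i)"

definition cd_lo :: "nat \<Rightarrow> (nat \<Rightarrow> 'a::zero) \<Rightarrow> (nat \<Rightarrow> 'a)" where
  "cd_lo n x = (\<lambda>i. if i < n then x i else 0)"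

definition cd_hi :: "nat \<Rightarrow> (nat \<Rightarrow> 'a::zero) \<Rightarrow> (nat \<Rightarrow> 'a)" where
  "cd_hi n x = (\<lambda>i. if i < n then x (i + n) else 0)"

definition cd_join :: "nat \<Rightarrow> (nat \<Rightarrow> 'a::zero) \<Rightarrow> (nat \<Rightarrow> 'a) \<Rightarrow> (nat \<Rightarrow> 'a)" where
  "cd_join n a b = (\<lambda>i. if i < n then a i else if i < 2 * n then b (i - n) else 0)"

fun cd_conj :: "'a::field list \<Rightarrow> (nat \<Rightarrow> 'a) \<Rightarrow> (nat \<Rightarrow> 'a)" where
  "cd_conj [] x = (\<lambda>i. if i = 0 then x 0 else 0)"
| "cd_conj (g # ps) x =
     (let n = 2 ^ length ps in cd_join n (cd_conj ps (cd_lo n x)) (- cd_hi n x))"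

fun cd_mult :: "'a::field list \<Rightarrow> (nat \<Rightarrow> 'a) \<Rightarrow> (nat \<Rightarrow> 'a) \<Rightarrow> (nat \<Rightarrow> 'a)" where
  "cd_mult [] x y = (\<lambda>i. if i = 0 then x 0 * y 0 else 0)"
| "cd_mult (g # ps) x y =
     (let n = 2 ^ length ps; a = cd_lo n x; b = cd_hi n x; c = cd_lo n y; d = cd_hi n y in
      cd_join n (cd_mult ps a c + cd_scale g (cd_mult ps d (cd_conj ps b)))
                (cd_mult ps (cd_conj ps a) d + cd_mult ps c b))"

definition cd_carrier :: "'a::field list \<Rightarrow> (nat \<Rightarrow> 'a) set" where
  "cd_carrier ps = {x. \<forall>i. 2 ^ length ps \<le> i \<longrightarrow> x i = 0}"

definition cd_one :: "nat \<Rightarrow> 'a::field" where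
  "cd_one = (\<lambda>i. if i = 0 then 1 else 0)"

text \<open>Cayley algebra D_gamma(D_beta(D_alpha(F))).\<close>
definition cayley_params :: "'a::field \<Rightarrow> 'a \<Rightarrow> 'a \<Rightarrow> 'a list" where
  "cayley_params \<alpha> \<beta> \<gamma> = [\<gamma>, \<beta>, \<alpha>]"

definition cd_im :: "'a::field list \<Rightarrow> (nat \<Rightarrow> 'a) set \<Rightarrow> (nat \<Rightarrow> 'a) set" where
  "cd_im ps H = {a \<in> H. cd_conj ps a = - a}"

definition cd_subalgebra :: "'a::field list \<Rightarrow> (nat \<Rightarrow> 'a) set \<Rightarrow> bool" where
  "cd_subalgebra ps H \<longleftrightarrow> H \<subseteq> cd_carrier ps \<and> module.subspace cd_scale H
     \<and> cd_one \<in> H \<and> (\<forall>x\<in>H. \<forall>y\<in>H. cd_mult ps x y \<in> H)"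

definition cd_associative_on :: "'a::field list \<Rightarrow> (nat \<Rightarrow> 'a) set \<Rightarrow> bool" where
  "cd_associative_on ps H \<longleftrightarrow>
     (\<forall>x\<in>H. \<forall>y\<in>H. \<forall>z\<in>H. cd_mult ps (cd_mult ps x y) z = cd_mult ps x (cd_mult ps y z))"

definition cd_division :: "'a::field list \<Rightarrow> bool" where
  "cd_division ps \<longleftrightarrow> (\<forall>x\<in>cd_carrier ps. \<forall>y\<in>cd_carrier ps.
      cd_mult ps x y = 0 \<longrightarrow> x = 0 \<or> y = 0)"

definition quat_blocks :: "'a::field list \<Rightarrow> (nat \<Rightarrow> 'a) set set" where
  "quat_blocks ps = {cd_im ps H | H. cd_subalgebra ps H \<and> cd_associative_on ps H
       \<and> vector_space.dim cd_scale H = 4}"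

end

theory Submission
  imports Defs
begin

text \<open>In coordinates the Cayley product is an explicit bilinear map on F^8, and the alternative
  laws, the quadratic relation x x - 2 x_0 x + N(x) = 0 and the fact that u v + v u is a scalar for
  imaginary u, v are polynomial identities. For independent imaginary u, v they show that
  span{1, u, v, u v} is closed under multiplication, and it is associative because the associator is
  alternating, trilinear and vanishes on (u, v, u v). Without zero divisors - N(u) is not a square,
  which forces 1, u, v, u v to be independent, so this span is a 4-dimensional associative
  subalgebra; any 4-dimensional subalgebra containing u and v contains these four elements and is
  therefore equal to it.\<close>

context vector_space
begin

lemma span_closed_bilinear:
  assumes lin_right: "\<And>x. Vector_Spaces.linear scale scale (f x)"
    and lin_left: "\<And>y. Vector_Spaces.linear scale scale (\<lambda>x. f x y)"
    and closed: "\<And>a b. a \<in> S \<Longrightarrow> b \<in> S \<Longrightarrow> f a b \<in> span S"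
    and "x \<in> span S" "y \<in> span S"
  shows "f x y \<in> span S"
proof -
  interpret vector_space_pair scale scale ..
  have "f a y \<in> span S" if "a \<in> S" for a
    using \<open>y \<in> span S\<close> by (induction rule: span_induct)
      (auto simp: subspace_def closed that linear_0[OF lin_right] linear_add[OF lin_right]
        linear_scale[OF lin_right] span_zero span_add span_scale)
  with \<open>x \<in> span S\<close> show ?thesis
    by (induction rule: span_induct)
      (auto simp: subspace_def linear_0[OF lin_left] linear_add[OF lin_left] linear_scale[OF lin_left]
        span_zero span_add span_scale)
qed

lemma trilinear_eq_0_on_span:
  assumes "\<And>y z. Vector_Spaces.linear scale scale (\<lambda>x. f x y z)"
    "\<And>x z. Vector_Spaces.linear scale scale (\<lambda>y. f x y z)"
    "\<And>x y. Vector_Spaces.linear scale scale (f x y)"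
    and zero: "\<And>a b c. a \<in> S \<Longrightarrow> b \<in> S \<Longrightarrow> c \<in> S \<Longrightarrow> f a b c = 0"
    and "x \<in> span S" "y \<in> span S" "z \<in> span S"
  shows "f x y z = 0"
proof -
  interpret vector_space_pair scale scale ..
  have "f a b z = 0" if "a \<in> S" "b \<in> S" for a b
    using linear_eq_0_on_span[OF assms(3), where b=S] zero that assms(7) by blast
  then have "f a y z = 0" if "a \<in> S" for a
    using linear_eq_0_on_span[OF assms(2), where b=S] that assms(6) by blast
  then show ?thesis
    using linear_eq_0_on_span[OF assms(1), where b=S] assms(5) by blast
qed

lemma subspace_eq_span_independent:
  assumes "subspace H" "independent S" "S \<subseteq> H" "finite S" "S \<noteq> {}" "card S = dim H"
  shows "H = span S"
proof
  show "span S \<subseteq> H" using assms span_minimal by blast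
  show "H \<subseteq> span S"
  proof
    fix x assume "x \<in> H"
    obtain B where B: "B \<subseteq> H" "independent B" "H \<subseteq> span B" "card B = dim H"
      by (rule basis_exists)
    have "finite B" using B(4) assms(4-6) by (metis card_eq_0_iff)
    show "x \<in> span S"
    proof (rule ccontr)
      assume "x \<notin> span S"
      then have "independent (insert x S)" "x \<notin> S"
        using assms(2) independent_insertI span_base by auto
      moreover have "insert x S \<subseteq> span B" using B(3) \<open>x \<in> H\<close> assms(3) by auto
      ultimately have "card (insert x S) \<le> card B"
        using independent_span_bound[OF \<open>finite B\<close>] by blast
      with \<open>x \<notin> S\<close> assms(4,6) B(4) show False by simp
    qed
  qed
qed

end

lemma alternating_zero_on_triple:
  fixes f :: "'b \<Rightarrow> 'b \<Rightarrow> 'b \<Rightarrow> 'c::ab_group_add"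
  assumes swap12: "\<And>x y z. f y x z = - f x y z" and swap23: "\<And>x y z. f x z y = - f x y z"
    and repeat: "\<And>x z. f x x z = 0" and uvw: "f u v w = 0"
    and "a \<in> {u, v, w}" "b \<in> {u, v, w}" "c \<in> {u, v, w}"
  shows "f a b c = 0"
proof -
  have repeat': "f x z x = 0" "f z x x = 0" for x z
    using repeat swap12 swap23 by (metis neg_equal_0_iff_equal)+
  have "f v u w = 0" "f u w v = 0" using uvw swap12 swap23 by (metis neg_equal_0_iff_equal)+
  moreover from this have "f w u v = 0" "f v w u = 0" using swap12 swap23 by (metis neg_equal_0_iff_equal)+
  moreover from this have "f w v u = 0" using swap12 by (metis neg_equal_0_iff_equal)
  ultimately show ?thesis
    using assms(5-7) uvw repeat repeat' by auto
qed

lemma vector_space_cd_scale: "vector_space (cd_scale :: 'a::field \<Rightarrow> (nat \<Rightarrow> 'a) \<Rightarrow> (nat \<Rightarrow> 'a))"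
  by unfold_locales (simp_all add: cd_scale_def fun_eq_iff algebra_simps)

interpretation VS: vector_space "cd_scale :: 'a::field \<Rightarrow> (nat \<Rightarrow> 'a) \<Rightarrow> (nat \<Rightarrow> 'a)"
  by (rule vector_space_cd_scale)

definition cayley_space :: "(nat \<Rightarrow> 'a::zero) set" where
  "cayley_space = {x. \<forall>i\<ge>8. x i = 0}"

lemma subspace_cayley_space: "VS.subspace (cayley_space :: (nat \<Rightarrow> 'a::field) set)"
  by (auto simp: VS.subspace_def cayley_space_def cd_scale_def)

lemma subspace_coordinate_zero: "VS.subspace {x :: nat \<Rightarrow> 'a::field. x k = 0}"
  by (auto simp: VS.subspace_def cd_scale_def)

lemma cd_one_in_cayley_space: "cd_one \<in> cayley_space"
  by (simp add: cayley_space_def cd_one_def)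

definition cayley_imag :: "(nat \<Rightarrow> 'a::zero) set" where
  "cayley_imag = {x \<in> cayley_space. x 0 = 0}"

lemma cayley_imag_subset: "cayley_imag \<subseteq> cayley_space"
  by (auto simp: cayley_imag_def)

lemma ext_below_8:
  fixes f g :: "nat \<Rightarrow> 'b"
  assumes "f 0 = g 0" "f 1 = g 1" "f 2 = g 2" "f 3 = g 3" "f 4 = g 4" "f 5 = g 5" "f 6 = g 6" "f 7 = g 7"
    and "\<And>i. i \<ge> 8 \<Longrightarrow> f i = g i"
  shows "f = g"
proof
  fix i :: nat
  show "f i = g i"
  proof (cases "i \<ge> 8")
    case False
    then have "i \<in> {0, 1, 2, 3, 4, 5, 6, 7}" by auto
    then show ?thesis using assms by auto
  qed (use assms in auto)
qed

lemma dim_cayley_imag: "VS.dim (cayley_imag :: (nat \<Rightarrow> 'a::field) set) = 7"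
proof -
  define e :: "nat \<Rightarrow> nat \<Rightarrow> 'a" where "e k = (\<lambda>j. if j = k then 1 else 0)" for k
  have "e ` {1..7} \<subseteq> cayley_imag" by (auto simp: e_def cayley_imag_def cayley_space_def)
  moreover have "cayley_imag \<subseteq> VS.span (e ` {1..7})"
  proof
    fix x :: "nat \<Rightarrow> 'a" assume x: "x \<in> cayley_imag"
    have "x = cd_scale (x 1) (e 1) + cd_scale (x 2) (e 2) + cd_scale (x 3) (e 3) + cd_scale (x 4) (e 4)
        + cd_scale (x 5) (e 5) + cd_scale (x 6) (e 6) + cd_scale (x 7) (e 7)"
      using x by (intro ext_below_8) (auto simp: e_def cd_scale_def cayley_imag_def cayley_space_def)
    also have "\<dots> \<in> VS.span (e ` {1..7})"
      by (intro VS.span_add VS.span_scale VS.span_base) auto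
    finally show "x \<in> VS.span (e ` {1..7})" .
  qed
  moreover have "VS.independent (e ` {1..7})"
    unfolding VS.dependent_def
  proof
    assume "\<exists>a\<in>e ` {1..7}. a \<in> VS.span (e ` {1..7} - {a})"
    then obtain k where k: "k \<in> {1..7}" "e k \<in> VS.span (e ` {1..7} - {e k})" by blast
    have "VS.span (e ` {1..7} - {e k}) \<subseteq> {x. x k = 0}"
      by (rule VS.span_minimal) (auto simp: e_def subspace_coordinate_zero)
    with k show False by (auto simp: e_def)
  qed
  moreover have "card (e ` {1..7}) = 7"
  proof -
    have "inj e" by (rule injI) (metis e_def zero_neq_one)
    then show ?thesis by (simp add: card_image inj_on_subset)
  qed
  ultimately show ?thesis by (rule VS.dim_unique)
qed

lemma dim_coordinate_kernel:
  fixes H :: "(nat \<Rightarrow> 'a::field) set"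
  assumes H: "VS.subspace H" "e \<in> H" "e k = 1" "VS.dim H = Suc n"
  shows "VS.dim {x \<in> H. x k = 0} = n"
proof -
  let ?K = "{x \<in> H. x k = 0}"
  obtain B where B: "B \<subseteq> ?K" "VS.independent B" "?K \<subseteq> VS.span B" "card B = VS.dim ?K"
    by (rule VS.basis_exists)
  obtain BH where BH: "BH \<subseteq> H" "VS.independent BH" "H \<subseteq> VS.span BH" "card BH = VS.dim H"
    by (rule VS.basis_exists)
  have "finite BH" using BH(4) H(4) by (metis card.infinite nat.simps(3))
  then have "finite B" using VS.independent_span_bound[OF _ B(2)] B(1) BH(3) by blast
  have "VS.span B \<subseteq> {x. x k = 0}"
    using B(1) by (intro VS.span_minimal subspace_coordinate_zero) auto
  then have e_notin: "e \<notin> VS.span B" using H(3) by auto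
  have "H \<subseteq> VS.span (insert e B)"
  proof
    fix x assume "x \<in> H"
    then have "x - cd_scale (x k) e \<in> H"
      using H by (intro VS.subspace_diff VS.subspace_scale)
    then have "x - cd_scale (x k) e \<in> ?K"
      using H(3) by (simp add: cd_scale_def)
    then show "x \<in> VS.span (insert e B)"
      using B(3) VS.span_breakdown_eq by blast
  qed
  moreover have "insert e B \<subseteq> H" "VS.independent (insert e B)"
    using B(1,2) H(2) e_notin VS.independent_insertI by auto
  ultimately have "VS.dim H = card (insert e B)"
    using VS.basis_card_eq_dim by metis
  also have "\<dots> = Suc (card B)"
    using \<open>finite B\<close> e_notin VS.span_base by (metis card_insert_disjoint)
  finally show ?thesis using B(4) H(4) by simp
qed

text \<open>The product of cd_mult (cayley_params \<alpha> \<beta> \<gamma>) written out in the coordinates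
  of the basis e_0 = 1, e_1, ..., e_7 of the iterated Dickson double.\<close>
definition cayley_mult :: "'a::field \<Rightarrow> 'a \<Rightarrow> 'a \<Rightarrow> (nat \<Rightarrow> 'a) \<Rightarrow> (nat \<Rightarrow> 'a) \<Rightarrow> nat \<Rightarrow> 'a" where
  "cayley_mult \<alpha> \<beta> \<gamma> x y = (\<lambda>i.
     if i = 0 then (\<alpha> * \<beta> * \<gamma> * (x 7) * (y 7)
        - \<alpha> * \<beta> * (x 3) * (y 3) - \<alpha> * \<gamma> * (x 5) * (y 5)
        + \<alpha> * (x 1) * (y 1) - \<beta> * \<gamma> * (x 6) * (y 6) + \<beta> * (x 2) * (y 2)
        + \<gamma> * (x 4) * (y 4) + (x 0) * (y 0))
     else if i = 1 then (\<beta> * \<gamma> * (x 6) * (y 7) - \<beta> * \<gamma> * (x 7) * (y 6)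
        + \<beta> * (x 2) * (y 3) - \<beta> * (x 3) * (y 2) + \<gamma> * (x 4) * (y 5)
        - \<gamma> * (x 5) * (y 4) + (x 0) * (y 1) + (x 1) * (y 0))
     else if i = 2 then (-\<alpha> * \<gamma> * (x 5) * (y 7)
        + \<alpha> * \<gamma> * (x 7) * (y 5) - \<alpha> * (x 1) * (y 3)
        + \<alpha> * (x 3) * (y 1) + \<gamma> * (x 4) * (y 6) - \<gamma> * (x 6) * (y 4)
        + (x 0) * (y 2) + (x 2) * (y 0))
     else if i = 3 then (\<gamma> * (x 4) * (y 7) - \<gamma> * (x 5) * (y 6)
        + \<gamma> * (x 6) * (y 5) - \<gamma> * (x 7) * (y 4) + (x 0) * (y 3) - (x 1) * (y 2)
        + (x 2) * (y 1) + (x 3) * (y 0))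
     else if i = 4 then (\<alpha> * \<beta> * (x 3) * (y 7) - \<alpha> * \<beta> * (x 7) * (y 3)
        - \<alpha> * (x 1) * (y 5) + \<alpha> * (x 5) * (y 1) - \<beta> * (x 2) * (y 6)
        + \<beta> * (x 6) * (y 2) + (x 0) * (y 4) + (x 4) * (y 0))
     else if i = 5 then (-\<beta> * (x 2) * (y 7) + \<beta> * (x 3) * (y 6)
        - \<beta> * (x 6) * (y 3) + \<beta> * (x 7) * (y 2) + (x 0) * (y 5) - (x 1) * (y 4)
        + (x 4) * (y 1) + (x 5) * (y 0))
     else if i = 6 then (\<alpha> * (x 1) * (y 7) - \<alpha> * (x 3) * (y 5)
        + \<alpha> * (x 5) * (y 3) - \<alpha> * (x 7) * (y 1) + (x 0) * (y 6) - (x 2) * (y 4)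
        + (x 4) * (y 2) + (x 6) * (y 0))
     else if i = 7 then ((x 0) * (y 7) + (x 1) * (y 6) - (x 2) * (y 5) - (x 3) * (y 4)
        + (x 4) * (y 3) + (x 5) * (y 2) - (x 6) * (y 1) + (x 7) * (y 0))
     else 0)"

lemma Suc_numerals_below_8: "Suc 0 = 1" "Suc 1 = 2" "Suc 2 = 3" "Suc 3 = 4" "Suc 4 = 5" "Suc 5 = 6" "Suc 6 = 7"
  by simp_all

lemma cd_mult_cayley_params: "cd_mult (cayley_params \<alpha> \<beta> \<gamma>) x y = cayley_mult \<alpha> \<beta> \<gamma> x y"
  unfolding cayley_params_def
  by (rule ext_below_8)
    (simp_all add: Let_def cd_join_def cd_lo_def cd_hi_def cd_scale_def,
     simp_all only: Suc_numerals_below_8, simp_all add: cayley_mult_def algebra_simps)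

lemma cd_conj_cayley_params:
  "cd_conj (cayley_params \<alpha> \<beta> \<gamma>) x = (\<lambda>i. if i = 0 then x 0 else if i < 8 then - x i else 0)"
  unfolding cayley_params_def
  by (rule ext_below_8)
    (simp_all add: Let_def cd_join_def cd_lo_def cd_hi_def, simp_all only: Suc_numerals_below_8)

lemma cd_carrier_cayley_params: "cd_carrier (cayley_params \<alpha> \<beta> \<gamma>) = cayley_space"
  by (simp add: cd_carrier_def cayley_params_def cayley_space_def)

lemma cd_im_cayley_params:
  assumes "(2::'a::field) \<noteq> 0" "H \<subseteq> cayley_space"
  shows "cd_im (cayley_params \<alpha> \<beta> \<gamma>) H = {x \<in> H. x 0 = (0::'a)}"
proof -
  have "cd_conj (cayley_params \<alpha> \<beta> \<gamma>) x = - x \<longleftrightarrow> x 0 = 0" if "x \<in> cayley_space" for x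
  proof
    assume "cd_conj (cayley_params \<alpha> \<beta> \<gamma>) x = - x"
    from fun_cong[OF this, of 0] have "x 0 = - x 0"
      by (simp add: cd_conj_cayley_params)
    then have "2 * x 0 = 0" by algebra
    with assms(1) show "x 0 = 0" by simp
  next
    assume "x 0 = 0"
    with that show "cd_conj (cayley_params \<alpha> \<beta> \<gamma>) x = - x"
      by (intro ext) (simp add: cd_conj_cayley_params cayley_space_def)
  qed
  with assms(2) show ?thesis by (auto simp: cd_im_def)
qed

lemma cd_im_cayley_carrier:
  "(2::'a::field) \<noteq> 0 \<Longrightarrow>
    cd_im (cayley_params \<alpha> \<beta> \<gamma>) (cd_carrier (cayley_params \<alpha> \<beta> \<gamma>)) = (cayley_imag :: (nat \<Rightarrow> 'a) set)"
  by (simp add: cd_carrier_cayley_params cd_im_cayley_params cayley_imag_def)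

locale cayley_coords =
  fixes \<alpha> \<beta> \<gamma> :: "'a::field"
begin

abbreviation mult :: "(nat \<Rightarrow> 'a) \<Rightarrow> (nat \<Rightarrow> 'a) \<Rightarrow> (nat \<Rightarrow> 'a)" (infixl \<open>\<odot>\<close> 70)
  where "x \<odot> y \<equiv> cayley_mult \<alpha> \<beta> \<gamma> x y"

definition associator :: "(nat \<Rightarrow> 'a) \<Rightarrow> (nat \<Rightarrow> 'a) \<Rightarrow> (nat \<Rightarrow> 'a) \<Rightarrow> (nat \<Rightarrow> 'a)" where
  "associator x y z = (x \<odot> y) \<odot> z - x \<odot> (y \<odot> z)"

lemma mult_in_cayley_space: "x \<odot> y \<in> cayley_space"
  by (simp add: cayley_space_def cayley_mult_def)

lemma mult_add_left: "(x + y) \<odot> z = x \<odot> z + y \<odot> z"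
  and mult_add_right: "z \<odot> (x + y) = z \<odot> x + z \<odot> y"
  and mult_scale_left: "cd_scale c x \<odot> z = cd_scale c (x \<odot> z)"
  and mult_scale_right: "z \<odot> cd_scale c x = cd_scale c (z \<odot> x)"
  by (rule ext_below_8; simp add: cayley_mult_def cd_scale_def algebra_simps)+

lemma mult_diff_left: "(x - y) \<odot> z = x \<odot> z - y \<odot> z"
  and mult_diff_right: "z \<odot> (x - y) = z \<odot> x - z \<odot> y"
  and mult_minus_left: "(- x) \<odot> z = - (x \<odot> z)"
  and mult_minus_right: "z \<odot> (- x) = - (z \<odot> x)"
  and mult_zero_right: "x \<odot> 0 = 0"
  by (rule ext_below_8; simp add: cayley_mult_def algebra_simps)+

lemma linear_mult_left: "Vector_Spaces.linear cd_scale cd_scale (\<lambda>x. x \<odot> y)"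
  and linear_mult_right: "Vector_Spaces.linear cd_scale cd_scale (\<lambda>y. x \<odot> y)"
  by (simp_all add: linear_iff vector_space_cd_scale mult_add_left mult_add_right
      mult_scale_left mult_scale_right)

lemma linear_associator:
  "Vector_Spaces.linear cd_scale cd_scale (\<lambda>x. associator x y z)"
  "Vector_Spaces.linear cd_scale cd_scale (\<lambda>y. associator x y z)"
  "Vector_Spaces.linear cd_scale cd_scale (\<lambda>z. associator x y z)"
  by (simp_all add: linear_iff vector_space_cd_scale associator_def mult_add_left mult_add_right
      mult_scale_left mult_scale_right VS.scale_right_diff_distrib)

lemma mult_one_left: "x \<in> cayley_space \<Longrightarrow> cd_one \<odot> x = x"
  and mult_one_right: "x \<in> cayley_space \<Longrightarrow> x \<odot> cd_one = x"
  by (rule ext_below_8; simp add: cayley_mult_def cd_one_def cayley_space_def)+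

lemma associator_swap12: "associator y x z = - associator x y z"
  and associator_swap23: "associator x z y = - associator x y z"
  and associator_left_alternative: "associator x x z = 0"
  and associator_right_alternative: "associator x z z = 0"
  unfolding associator_def by (rule ext_below_8; simp add: cayley_mult_def; algebra)+

lemma associator_flexible: "associator x y x = 0"
  using associator_swap23[of x x y] by (simp add: associator_left_alternative)

lemma associator_mult: "associator x y (x \<odot> y) = 0"
  unfolding associator_def by (rule ext_below_8; simp add: cayley_mult_def; algebra)

text \<open>These hold for all y, z, not only on the carrier: the product only reads
  the coordinates below 8.\<close>
lemma associator_one:
  "associator cd_one y z = 0" "associator y cd_one z = 0" "associator y z cd_one = 0"
  unfolding associator_def by (rule ext_below_8; simp add: cayley_mult_def cd_one_def; algebra)+

text \<open>The norm N(x) = x x^* in coordinates.\<close>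
definition norm_form :: "(nat \<Rightarrow> 'a) \<Rightarrow> 'a" where
  "norm_form x = x 0 * x 0 - \<alpha> * x 1 * x 1 - \<beta> * x 2 * x 2 + \<alpha> * \<beta> * x 3 * x 3
     - \<gamma> * x 4 * x 4 + \<alpha> * \<gamma> * x 5 * x 5 + \<beta> * \<gamma> * x 6 * x 6 - \<alpha> * \<beta> * \<gamma> * x 7 * x 7"

lemma mult_self:
  "x \<in> cayley_space \<Longrightarrow> x \<odot> x = cd_scale (2 * x 0) x - cd_scale (norm_form x) cd_one"
  by (rule ext_below_8; simp add: cayley_mult_def norm_form_def cd_scale_def cd_one_def cayley_space_def;
      algebra)

lemma imag_mult_self: "u \<in> cayley_imag \<Longrightarrow> u \<odot> u = cd_scale (- norm_form u) cd_one"
  using mult_self[of u] by (simp add: cayley_imag_def cd_scale_def fun_eq_iff)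

lemma imag_mult_commute:
  assumes "u \<in> cayley_imag" "v \<in> cayley_imag"
  shows "v \<odot> u = cd_scale (2 * (u \<odot> v) 0) cd_one - u \<odot> v"
  using assms
  by (rule_tac ext_below_8; simp add: cayley_mult_def cd_scale_def cd_one_def cayley_imag_def cayley_space_def;
      algebra)

lemma imag_mult_mult_left:
  assumes "u \<in> cayley_imag" "v \<in> cayley_space"
  shows "u \<odot> (u \<odot> v) = cd_scale (- norm_form u) v"
proof -
  have "u \<odot> (u \<odot> v) = (u \<odot> u) \<odot> v"
    using associator_left_alternative[of u v] by (simp add: associator_def)
  also have "\<dots> = cd_scale (- norm_form u) v"
    using assms by (simp add: imag_mult_self mult_scale_left mult_minus_left mult_one_left)
  finally show ?thesis .
qed

lemma mult_mult_imag_right: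
  assumes "u \<in> cayley_space" "v \<in> cayley_imag"
  shows "(u \<odot> v) \<odot> v = cd_scale (- norm_form v) u"
proof -
  have "(u \<odot> v) \<odot> v = u \<odot> (v \<odot> v)"
    using associator_right_alternative[of u v] by (simp add: associator_def)
  also have "\<dots> = cd_scale (- norm_form v) u"
    using assms by (simp add: imag_mult_self mult_scale_right mult_minus_right mult_one_right)
  finally show ?thesis .
qed

definition quat_gens :: "(nat \<Rightarrow> 'a) \<Rightarrow> (nat \<Rightarrow> 'a) \<Rightarrow> (nat \<Rightarrow> 'a) set" where
  "quat_gens u v = {cd_one, u, v, u \<odot> v}"

lemma quat_gens_subset_cayley_space:
  "u \<in> cayley_space \<Longrightarrow> v \<in> cayley_space \<Longrightarrow> quat_gens u v \<subseteq> cayley_space"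
  by (simp add: quat_gens_def cd_one_in_cayley_space mult_in_cayley_space)

lemma imag_mult_mult_flexible_left:
  assumes u: "u \<in> cayley_imag" and v: "v \<in> cayley_imag"
  shows "(u \<odot> v) \<odot> u = cd_scale (2 * (u \<odot> v) 0) u - cd_scale (- norm_form u) v"
proof -
  have "(u \<odot> v) \<odot> u = u \<odot> (v \<odot> u)"
    using associator_flexible[of u v] by (simp add: associator_def)
  also have "\<dots> = u \<odot> cd_scale (2 * (u \<odot> v) 0) cd_one - u \<odot> (u \<odot> v)"
    by (simp only: imag_mult_commute[OF u v] mult_diff_right)
  also have "\<dots> = cd_scale (2 * (u \<odot> v) 0) u - cd_scale (- norm_form u) v"
    using u subsetD[OF cayley_imag_subset u] subsetD[OF cayley_imag_subset v]
    by (simp add: mult_scale_right mult_one_right imag_mult_mult_left)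
  finally show ?thesis .
qed

lemma imag_mult_mult_flexible_right:
  assumes u: "u \<in> cayley_imag" and v: "v \<in> cayley_imag"
  shows "v \<odot> (u \<odot> v) = cd_scale (2 * (u \<odot> v) 0) v - cd_scale (- norm_form v) u"
proof -
  have "v \<odot> (u \<odot> v) = (v \<odot> u) \<odot> v"
    using associator_flexible[of v u] by (simp add: associator_def)
  also have "\<dots> = cd_scale (2 * (u \<odot> v) 0) cd_one \<odot> v - (u \<odot> v) \<odot> v"
    by (simp only: imag_mult_commute[OF u v] mult_diff_left)
  also have "\<dots> = cd_scale (2 * (u \<odot> v) 0) v - cd_scale (- norm_form v) u"
    using v subsetD[OF cayley_imag_subset u] subsetD[OF cayley_imag_subset v]
    by (simp add: mult_scale_left mult_one_left mult_mult_imag_right)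
  finally show ?thesis .
qed

lemma mult_quat_gens_in_span:
  assumes u: "u \<in> cayley_imag" and v: "v \<in> cayley_imag"
    and "a \<in> quat_gens u v" "b \<in> quat_gens u v"
  shows "a \<odot> b \<in> VS.span (quat_gens u v)"
proof -
  let ?S = "quat_gens u v" and ?w = "u \<odot> v"
  have gens: "cd_one \<in> VS.span ?S" "u \<in> VS.span ?S" "v \<in> VS.span ?S" "?w \<in> VS.span ?S"
    by (simp_all add: quat_gens_def VS.span_base)
  have uC: "u \<in> cayley_space" and vC: "v \<in> cayley_space" and wC: "?w \<in> cayley_space"
    using u v cayley_imag_subset mult_in_cayley_space by auto
  have products: "u \<odot> u \<in> VS.span ?S" "v \<odot> v \<in> VS.span ?S" "v \<odot> u \<in> VS.span ?S"
    "u \<odot> ?w \<in> VS.span ?S" "?w \<odot> u \<in> VS.span ?S" "v \<odot> ?w \<in> VS.span ?S" "?w \<odot> v \<in> VS.span ?S"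
    "?w \<odot> ?w \<in> VS.span ?S"
    by (simp_all only: imag_mult_self[OF u] imag_mult_self[OF v] imag_mult_commute[OF u v]
        imag_mult_mult_left[OF u vC] mult_mult_imag_right[OF uC v] imag_mult_mult_flexible_left[OF u v]
        imag_mult_mult_flexible_right[OF u v] mult_self[OF wC])
      (intro VS.span_diff VS.span_scale gens)+
  have one: "cd_one \<odot> x \<in> VS.span ?S" "x \<odot> cd_one \<in> VS.span ?S" if "x \<in> ?S" for x
    using that quat_gens_subset_cayley_space[OF uC vC]
    by (auto simp: mult_one_left mult_one_right VS.span_base)
  from assms(3) have "a = cd_one \<or> a = u \<or> a = v \<or> a = ?w" by (simp add: quat_gens_def)
  moreover from assms(4) have "b = cd_one \<or> b = u \<or> b = v \<or> b = ?w" by (simp add: quat_gens_def)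
  ultimately show ?thesis
    using products gens one[OF assms(3)] one[OF assms(4)] by (elim disjE) simp_all
qed

lemma associator_quat_gens:
  assumes "a \<in> quat_gens u v" "b \<in> quat_gens u v" "c \<in> quat_gens u v"
  shows "associator a b c = 0"
proof (cases "cd_one \<in> {a, b, c}")
  case True
  then show ?thesis using associator_one by auto
next
  case False
  with assms have "a \<in> {u, v, u \<odot> v}" "b \<in> {u, v, u \<odot> v}" "c \<in> {u, v, u \<odot> v}"
    by (auto simp: quat_gens_def)
  then show ?thesis
    by (rule alternating_zero_on_triple[where f = associator, OF associator_swap12 associator_swap23
          associator_left_alternative associator_mult])
qed

lemma associator_span_quat_gens:
  assumes "x \<in> VS.span (quat_gens u v)" "y \<in> VS.span (quat_gens u v)" "z \<in> VS.span (quat_gens u v)"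
  shows "associator x y z = 0"
  using VS.trilinear_eq_0_on_span[OF linear_associator associator_quat_gens assms] .

lemma span_quat_gens_mult_closed:
  assumes "u \<in> cayley_imag" "v \<in> cayley_imag"
    and "x \<in> VS.span (quat_gens u v)" "y \<in> VS.span (quat_gens u v)"
  shows "x \<odot> y \<in> VS.span (quat_gens u v)"
  using VS.span_closed_bilinear[OF linear_mult_right linear_mult_left mult_quat_gens_in_span[OF assms(1,2)]
      assms(3,4)] .

lemma cayley_no_zero_divisors:
  assumes "cd_division (cayley_params \<alpha> \<beta> \<gamma>)" "x \<in> cayley_space" "y \<in> cayley_space" "x \<odot> y = 0"
  shows "x = 0 \<or> y = 0"
  using assms by (simp add: cd_division_def cd_carrier_cayley_params cd_mult_cayley_params)

lemma imag_mult_self_not_square: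
  assumes div: "cd_division (cayley_params \<alpha> \<beta> \<gamma>)" and u: "u \<in> cayley_imag" "u \<noteq> 0"
  shows "- norm_form u \<noteq> c * c"
proof
  assume square: "- norm_form u = c * c"
  let ?c = "cd_scale c cd_one"
  have uC: "u \<in> cayley_space" using u cayley_imag_subset by auto
  have cC: "?c \<in> cayley_space"
    using cd_one_in_cayley_space subspace_cayley_space VS.subspace_scale by blast
  have "(u - ?c) \<odot> (u + ?c) = u \<odot> u - cd_scale (c * c) cd_one"
    using uC cd_one_in_cayley_space
    by (simp add: mult_diff_left mult_add_right mult_scale_left mult_scale_right mult_one_left
        mult_one_right mult_one_left[OF cd_one_in_cayley_space] algebra_simps)
  also have "\<dots> = 0"
    using u square by (simp add: imag_mult_self)
  finally have "u - ?c = 0 \<or> u + ?c = 0"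
    using cayley_no_zero_divisors[OF div] uC cC subspace_cayley_space
    by (meson VS.subspace_add VS.subspace_diff)
  then have "u = cd_scale c cd_one \<or> u = cd_scale (- c) cd_one"
    by (auto simp: eq_neg_iff_add_eq_0)
  moreover have "u 0 = 0" using u by (simp add: cayley_imag_def)
  ultimately have "c = 0" by (auto simp: cd_scale_def cd_one_def)
  with \<open>u = cd_scale c cd_one \<or> u = cd_scale (- c) cd_one\<close> \<open>u \<noteq> 0\<close> show False
    by (simp add: cd_scale_def fun_eq_iff)
qed

lemma span_one_imag_mult_closed:
  assumes "u \<in> cayley_imag" "x \<in> VS.span {cd_one, u}"
  shows "u \<odot> x \<in> VS.span {cd_one, u}"
  using assms(2)
proof (induction rule: VS.span_induct)
  case base
  show ?case
    by (auto simp: VS.subspace_def mult_zero_right mult_add_right mult_scale_right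
        VS.span_zero VS.span_add VS.span_scale)
next
  case (step x)
  have "u \<odot> u \<in> VS.span {cd_one, u}"
    unfolding imag_mult_self[OF assms(1)] by (intro VS.span_scale VS.span_base) simp
  with step assms(1) cayley_imag_subset show ?case
    by (auto simp: mult_one_right VS.span_base)
qed

text \<open>If u v = p + c v with p in span{1, u}, multiplying by u on the left gives
  (- N(u) - c^2) v = u p + c p in span{1, u}, and - N(u) is not a square.\<close>
lemma imag_mult_notin_span:
  assumes div: "cd_division (cayley_params \<alpha> \<beta> \<gamma>)"
    and u: "u \<in> cayley_imag" "u \<noteq> 0" and v: "v \<in> cayley_imag" "v \<notin> VS.span {cd_one, u}"
  shows "u \<odot> v \<notin> VS.span {cd_one, u, v}"
proof
  assume "u \<odot> v \<in> VS.span {cd_one, u, v}"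
  then obtain c where p: "u \<odot> v - cd_scale c v \<in> VS.span {cd_one, u}"
    using VS.span_breakdown_eq[of "u \<odot> v" v "{cd_one, u}"] by (auto simp: insert_commute)
  define d where "d = - norm_form u - c * c"
  have "d \<noteq> 0"
    using imag_mult_self_not_square[OF div u] by (simp add: d_def)
  have vC: "v \<in> cayley_space" using v cayley_imag_subset by auto
  have "u \<odot> (u \<odot> v - cd_scale c v) = cd_scale (- norm_form u) v - cd_scale c (u \<odot> v)"
    by (simp only: mult_diff_right mult_scale_right imag_mult_mult_left[OF u(1) vC])
  then have "cd_scale d v = u \<odot> (u \<odot> v - cd_scale c v) + cd_scale c (u \<odot> v - cd_scale c v)"
    by (simp add: fun_eq_iff cd_scale_def d_def algebra_simps)
  also have "\<dots> \<in> VS.span {cd_one, u}"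
    using p span_one_imag_mult_closed[OF u(1)] by (intro VS.span_add VS.span_scale)
  finally have "cd_scale (inverse d) (cd_scale d v) \<in> VS.span {cd_one, u}"
    by (rule VS.span_scale)
  with \<open>d \<noteq> 0\<close> v(2) show False by simp
qed

lemma independent_quat_gens:
  assumes div: "cd_division (cayley_params \<alpha> \<beta> \<gamma>)"
    and u: "u \<in> cayley_imag" and v: "v \<in> cayley_imag" and ind: "VS.independent {u, v}" and "u \<noteq> v"
  shows "VS.independent (quat_gens u v)" "card (quat_gens u v) = 4"
proof -
  have "VS.span {u, v} \<subseteq> {x. x 0 = 0}"
    using u v by (intro VS.span_minimal subspace_coordinate_zero) (auto simp: cayley_imag_def)
  then have "cd_one \<notin> VS.span {u, v}" by (auto simp: cd_one_def)
  then have ind3: "VS.independent {cd_one, u, v}"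
    using ind by (rule VS.independent_insertI)
  have "u \<noteq> 0" using ind VS.dependent_zero by blast
  have "u 0 = 0" "v 0 = 0" "cd_one 0 = (1::'a)"
    using u v by (simp_all add: cayley_imag_def cd_one_def)
  then have distinct3: "cd_one \<noteq> u" "cd_one \<noteq> v"
    by (metis zero_neq_one)+
  have "{cd_one, u, v} = insert v {cd_one, u}" by auto
  then have "v \<notin> VS.span {cd_one, u}"
    using ind3 \<open>u \<noteq> v\<close> distinct3 VS.independent_insert[of v "{cd_one, u}"] by auto
  then have w: "u \<odot> v \<notin> VS.span {cd_one, u, v}"
    by (rule imag_mult_notin_span[OF div u \<open>u \<noteq> 0\<close> v])
  have gens: "quat_gens u v = insert (u \<odot> v) {cd_one, u, v}" by (auto simp: quat_gens_def)
  then show "VS.independent (quat_gens u v)"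
    using VS.independent_insertI[OF w ind3] by simp
  have "card {cd_one, u, v} = 3"
    using distinct3 \<open>u \<noteq> v\<close> by simp
  moreover have "u \<odot> v \<notin> {cd_one, u, v}"
  proof
    assume "u \<odot> v \<in> {cd_one, u, v}"
    then have "u \<odot> v \<in> VS.span {cd_one, u, v}" by (rule VS.span_base)
    with w show False by contradiction
  qed
  ultimately show "card (quat_gens u v) = 4"
    unfolding gens by (subst card_insert_disjoint) simp_all
qed

lemma subalgebra_span_quat_gens:
  assumes "u \<in> cayley_imag" "v \<in> cayley_imag"
  shows "cd_subalgebra (cayley_params \<alpha> \<beta> \<gamma>) (VS.span (quat_gens u v))"
    and "cd_associative_on (cayley_params \<alpha> \<beta> \<gamma>) (VS.span (quat_gens u v))"
proof -
  have "VS.span (quat_gens u v) \<subseteq> cayley_space"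
    using assms cayley_imag_subset quat_gens_subset_cayley_space
    by (intro VS.span_minimal subspace_cayley_space) auto
  then show "cd_subalgebra (cayley_params \<alpha> \<beta> \<gamma>) (VS.span (quat_gens u v))"
    using span_quat_gens_mult_closed[OF assms]
    by (auto simp: cd_subalgebra_def cd_carrier_cayley_params cd_mult_cayley_params quat_gens_def
        intro: VS.span_base)
  show "cd_associative_on (cayley_params \<alpha> \<beta> \<gamma>) (VS.span (quat_gens u v))"
    using associator_span_quat_gens
    by (simp add: cd_associative_on_def cd_mult_cayley_params associator_def)
qed

lemma subalgebra_eq_span_quat_gens:
  assumes div: "cd_division (cayley_params \<alpha> \<beta> \<gamma>)"
    and u: "u \<in> cayley_imag" and v: "v \<in> cayley_imag" and "VS.independent {u, v}" "u \<noteq> v"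
    and H: "cd_subalgebra (cayley_params \<alpha> \<beta> \<gamma>) H" "VS.dim H = 4" "u \<in> H" "v \<in> H"
  shows "H = VS.span (quat_gens u v)"
proof (rule VS.subspace_eq_span_independent)
  show "quat_gens u v \<subseteq> H"
    using H by (auto simp: cd_subalgebra_def cd_mult_cayley_params quat_gens_def)
  show "VS.independent (quat_gens u v)" "card (quat_gens u v) = VS.dim H"
    using independent_quat_gens[OF div u v assms(4,5)] H(2) by simp_all
qed (use H(1) in \<open>auto simp: cd_subalgebra_def quat_gens_def\<close>)

lemma dim_quat_block:
  assumes "(2::'a) \<noteq> 0" "B \<in> quat_blocks (cayley_params \<alpha> \<beta> \<gamma>)"
  shows "VS.dim B = 3"
proof -
  obtain H where H: "B = cd_im (cayley_params \<alpha> \<beta> \<gamma>) H" "cd_subalgebra (cayley_params \<alpha> \<beta> \<gamma>) H"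
    "VS.dim H = 4"
    using assms(2) unfolding quat_blocks_def by blast
  then have "H \<subseteq> cayley_space" "VS.subspace H" "cd_one \<in> H"
    by (auto simp: cd_subalgebra_def cd_carrier_cayley_params)
  with H show ?thesis
    using dim_coordinate_kernel[of H cd_one 0 3] cd_im_cayley_params[OF assms(1)]
    by (simp add: cd_one_def)
qed

lemma quat_block_quat_gens:
  assumes div: "cd_division (cayley_params \<alpha> \<beta> \<gamma>)"
    and u: "u \<in> cayley_imag" and v: "v \<in> cayley_imag" and "VS.independent {u, v}" "u \<noteq> v"
  shows "cd_im (cayley_params \<alpha> \<beta> \<gamma>) (VS.span (quat_gens u v)) \<in> quat_blocks (cayley_params \<alpha> \<beta> \<gamma>)"
proof -
  have "VS.dim (VS.span (quat_gens u v)) = 4"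
    using independent_quat_gens[OF div u v assms(4,5)] by (simp add: VS.dim_eq_card_independent)
  then show ?thesis
    unfolding quat_blocks_def using subalgebra_span_quat_gens[OF u v]
    by (intro CollectI exI[of _ "VS.span (quat_gens u v)"] conjI refl)
qed

lemma quat_block_eq_quat_gens:
  assumes div: "cd_division (cayley_params \<alpha> \<beta> \<gamma>)"
    and u: "u \<in> cayley_imag" and v: "v \<in> cayley_imag" and "VS.independent {u, v}" "u \<noteq> v"
    and B: "B \<in> quat_blocks (cayley_params \<alpha> \<beta> \<gamma>)" "u \<in> B" "v \<in> B"
  shows "B = cd_im (cayley_params \<alpha> \<beta> \<gamma>) (VS.span (quat_gens u v))"
proof -
  obtain H where H: "B = cd_im (cayley_params \<alpha> \<beta> \<gamma>) H" "cd_subalgebra (cayley_params \<alpha> \<beta> \<gamma>) H"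
    "VS.dim H = 4"
    using B(1) unfolding quat_blocks_def by blast
  have "u \<in> H" "v \<in> H"
    using B(2,3) H(1) by (auto simp: cd_im_def)
  then show ?thesis
    using subalgebra_eq_span_quat_gens[OF div u v assms(4,5) H(2,3)] H(1) by simp
qed

lemma quat_block_through_plane:
  assumes char: "(2::'a) \<noteq> 0" and div: "cd_division (cayley_params \<alpha> \<beta> \<gamma>)"
    and U: "VS.subspace U" "U \<subseteq> cayley_imag" "VS.dim U = 2"
  shows "\<exists>!B. B \<in> quat_blocks (cayley_params \<alpha> \<beta> \<gamma>) \<and> U \<subseteq> B"
proof -
  obtain Bu where Bu: "Bu \<subseteq> U" "VS.independent Bu" "U \<subseteq> VS.span Bu" "card Bu = VS.dim U"
    by (rule VS.basis_exists)
  then obtain u v where uv: "Bu = {u, v}" "u \<noteq> v"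
    using U(3) by (auto simp: card_2_iff)
  with Bu U(2) have u: "u \<in> cayley_imag" and v: "v \<in> cayley_imag" and ind: "VS.independent {u, v}"
    by auto
  let ?H = "VS.span (quat_gens u v)"
  have "?H \<subseteq> cayley_space"
    using u v cayley_imag_subset quat_gens_subset_cayley_space
    by (intro VS.span_minimal subspace_cayley_space) auto
  moreover have "VS.span {u, v} \<subseteq> ?H"
    by (rule VS.span_mono) (auto simp: quat_gens_def)
  ultimately have contains: "U \<subseteq> cd_im (cayley_params \<alpha> \<beta> \<gamma>) ?H"
    using U(2) Bu(3) uv(1) by (auto simp: cd_im_cayley_params[OF char] cayley_imag_def)
  show ?thesis
  proof (rule ex1I)
    show "cd_im (cayley_params \<alpha> \<beta> \<gamma>) ?H \<in> quat_blocks (cayley_params \<alpha> \<beta> \<gamma>)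
        \<and> U \<subseteq> cd_im (cayley_params \<alpha> \<beta> \<gamma>) ?H"
      using quat_block_quat_gens[OF div u v ind uv(2)] contains by (rule conjI)
  next
    fix B assume "B \<in> quat_blocks (cayley_params \<alpha> \<beta> \<gamma>) \<and> U \<subseteq> B"
    then show "B = cd_im (cayley_params \<alpha> \<beta> \<gamma>) ?H"
      using quat_block_eq_quat_gens[OF div u v ind uv(2)] Bu(1) uv(1) by auto
  qed
qed

end

theorem mainTheorem1:
  fixes \<alpha> \<beta> \<gamma> :: "'a::field"
  assumes char: "(2::'a) \<noteq> 0"
    and nz: "\<alpha> \<noteq> 0" "\<beta> \<noteq> 0" "\<gamma> \<noteq> 0"
    and div: "cd_division (cayley_params \<alpha> \<beta> \<gamma>)"
  shows "vector_space.dim cd_scale (cd_im (cayley_params \<alpha> \<beta> \<gamma>) (cd_carrier (cayley_params \<alpha> \<beta> \<gamma>))) = 7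
    \<and> (\<forall>B \<in> quat_blocks (cayley_params \<alpha> \<beta> \<gamma>). vector_space.dim cd_scale B = 3)
    \<and> (\<forall>U. module.subspace cd_scale U
          \<and> U \<subseteq> cd_im (cayley_params \<alpha> \<beta> \<gamma>) (cd_carrier (cayley_params \<alpha> \<beta> \<gamma>))
          \<and> vector_space.dim cd_scale U = 2
          \<longrightarrow> (\<exists>!B. B \<in> quat_blocks (cayley_params \<alpha> \<beta> \<gamma>) \<and> U \<subseteq> B))"
proof -
  interpret cayley_coords \<alpha> \<beta> \<gamma> .
  show ?thesis
    using dim_cayley_imag dim_quat_block[OF char] quat_block_through_plane[OF char div]
    by (simp add: cd_im_cayley_carrier[OF char])
qed

end
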